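(* The family of recursively enumerable safety constraints is a family with a universal detector, i.e. there is a detector $u$ such that $\{C_u(x):x\in|u|\}$ is exactly the set of recursively enumerable safety constraints.
   Context: Fix a finite nonempty set $N$; $N^+$ the nonempty finite words, $N^{\mathbb N}$ the streams; $s[m{:}]$ the suffix; $n^{-1}\cdot A=\{u:nu\in A\}$; a set of words is prefix-free if no proper prefix (including the empty word) of a member is a member. Let $\mathbf 1=\{\Downarrow\}$. A detector is a set $|a|$ with $a:|a|\to(\mathbf 1+|a|)^N$. The final detector $\omega$ has carrier $\Omega$ = the set of prefix-free subsets of $N^+$, with $\omega(P)(n)=\Downarrow$ if $n\in P$, else $n^{-1}\cdot P$. For $s\in N^{\mathbb N}$, $\mathrm{Join}([s],a)$ maps $(t,y)\in\{s[k{:}]\}\times|a|$ to $\Downarrow$ if $a(y)(t(0))=\Downarrow$, else $(t[1{:}],a(y)(t(0)))$; iterates $g^{(1)}=g$, $g^{(k+1)}(z)=\Downarrow$ if $g^{(k)}(z)=\Downarrow$, else $g(g^{(k)}(z))$. $C_a(x)=\{s:\mathrm{Join}([s],a)^{(k)}(s,x)\ne\Downarrow\ \forall k\ge1\}$. A safety constraint $S$ is recursively enumerable if $S=C_\omega(P)$ for some $P\in\Omega$ that is a recursively enumerable set of words. A family $\mathcal F$ of safety constraints is a family with a universal detector if $\mathcal F=\{C_a(x):x\in|a|\}$ for some detector $a$. *)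

theory Defs
  imports Main "HOL-Library.Sublist" "HOL-Library.Nat_Bijection"
begin

datatype recf = Zr | Sc | Proj nat | Cn recf "recf list" | Pr recf recf | Mn recf

inductive ev :: "recf \<Rightarrow> nat list \<Rightarrow> nat \<Rightarrow> bool" where
  evZ: "ev Zr xs 0"
| evS: "ev Sc (x # xs) (Suc x)"
| evProj: "i < length xs \<Longrightarrow> ev (Proj i) xs (xs ! i)"
| evCn: "length ys = length gs \<Longrightarrow> (\<forall>i < length gs. ev (gs ! i) xs (ys ! i))
          \<Longrightarrow> ev f ys z \<Longrightarrow> ev (Cn f gs) xs z"
| evPr0: "ev f xs y \<Longrightarrow> ev (Pr f g) (0 # xs) y"
| evPrS: "ev (Pr f g) (n # xs) y \<Longrightarrow> ev g (n # y # xs) z \<Longrightarrow> ev (Pr f g) (Suc n # xs) z"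
| evMn: "ev f (n # xs) 0 \<Longrightarrow> (\<forall>m < n. \<exists>v. 0 < v \<and> ev f (m # xs) v) \<Longrightarrow> ev (Mn f) xs n"

definition re_nat :: "nat set \<Rightarrow> bool" where
  "re_nat A \<longleftrightarrow> (\<exists>f. A = {n. \<exists>y. ev f [n] y})"

text \<open>A set of words over the finite alphabet 'a is r.e. iff its image under some
injective coding of letters followed by the standard list coding is r.e.
(the choice of injective letter coding is immaterial).\<close>
definition re_words :: "'a::finite list set \<Rightarrow> bool" where
  "re_words P \<longleftrightarrow> (\<exists>c :: 'a \<Rightarrow> nat. inj c \<and> re_nat ((\<lambda>w. list_encode (map c w)) ` P))"

text \<open>Streams are nat \<Rightarrow> 'a; the value None plays the role of \<Down>.\<close>
definition detector :: "'c set \<Rightarrow> ('c \<Rightarrow> 'a \<Rightarrow> 'c option) \<Rightarrow> bool" where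
  "detector X a \<longleftrightarrow> (\<forall>x\<in>X. \<forall>n. a x n = None \<or> (\<exists>y\<in>X. a x n = Some y))"

definition prefix_free :: "'a list set \<Rightarrow> bool" where
  "prefix_free P \<longleftrightarrow> (\<forall>u\<in>P. \<forall>v\<in>P. \<not> strict_prefix u v)"

definition Omega :: "'a list set set" where
  "Omega = {P. (\<forall>w\<in>P. w \<noteq> []) \<and> prefix_free P}"

definition omega :: "'a list set \<Rightarrow> 'a \<Rightarrow> 'a list set option" where
  "omega P n = (if [n] \<in> P then None else Some {u. n # u \<in> P})"

definition Join :: "('c \<Rightarrow> 'a \<Rightarrow> 'c option) \<Rightarrow> (nat \<Rightarrow> 'a) \<times> 'c \<Rightarrow> ((nat \<Rightarrow> 'a) \<times> 'c) option" where
  "Join a = (\<lambda>(t, y). case a y (t 0) of None \<Rightarrow> None | Some y' \<Rightarrow> Some (\<lambda>m. t (Suc m), y'))"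

text \<open>iter g k = g^(k) for k \<ge> 1 (iter g 0 is the identity, never used).\<close>
fun iter :: "('z \<Rightarrow> 'z option) \<Rightarrow> nat \<Rightarrow> 'z \<Rightarrow> 'z option" where
  "iter g 0 z = Some z"
| "iter g (Suc k) z = (case iter g k z of None \<Rightarrow> None | Some w \<Rightarrow> g w)"

definition C :: "('c \<Rightarrow> 'a \<Rightarrow> 'c option) \<Rightarrow> 'c \<Rightarrow> (nat \<Rightarrow> 'a) set" where
  "C a x = {s. \<forall>k\<ge>1. iter (Join a) k (s, x) \<noteq> None}"

definition re_safety :: "(nat \<Rightarrow> 'a::finite) set \<Rightarrow> bool" where
  "re_safety S \<longleftrightarrow> (\<exists>P\<in>Omega. re_words P \<and> S = C omega P)"

end

theory Submission
  imports Defs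
begin

text \<open>The final detector restricted to the recursively enumerable prefix-free sets is itself
a detector, because the derivative \<open>{u. n # u \<in> P}\<close> of an r.e. prefix-free set is again r.e.
and prefix-free.
Recursive enumerability of the derivative holds because its code set is the preimage of the code
set of \<open>P\<close> under \<open>x \<mapsto> list_encode (c n # \<dots>) = Suc (prod_encode (c n, x))\<close>, a total recursive
function.\<close>

inductive_cases ev_ZrE: "ev Zr xs y"
inductive_cases ev_ScE: "ev Sc xs y"
inductive_cases ev_ProjE: "ev (Proj i) xs y"
inductive_cases ev_CnE: "ev (Cn f gs) xs y"
inductive_cases ev_PrE: "ev (Pr f g) xs y"
inductive_cases ev_MnE: "ev (Mn f) xs y"

lemma ev_deterministic: "ev f xs y \<Longrightarrow> ev f xs y' \<Longrightarrow> y = y'"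
proof (induction arbitrary: y' rule: ev.induct)
  case (evZ xs)
  then show ?case by (auto elim: ev_ZrE)
next
  case (evS x xs)
  then show ?case by (auto elim: ev_ScE)
next
  case (evProj i xs)
  then show ?case by (auto elim: ev_ProjE)
next
  case (evCn ys gs xs f z)
  from evCn.prems obtain ys' where len: "length ys' = length gs"
    and args: "\<forall>i<length gs. ev (gs ! i) xs (ys' ! i)" and val: "ev f ys' y'"
    by (auto elim: ev_CnE)
  have "ys = ys'"
  proof (rule nth_equalityI)
    show "length ys = length ys'" using evCn.hyps(1) len by simp
    fix i assume "i < length ys"
    with evCn.hyps(1) have "i < length gs" by simp
    with args evCn.IH show "ys ! i = ys' ! i" by blast
  qed
  with evCn.IH(2) val show ?case by simp
next
  case (evPr0 f xs y g)
  from evPr0.prems show ?case by (rule ev_PrE) (use evPr0.IH in auto)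
next
  case (evPrS f g n xs y z)
  from evPrS.prems obtain y2 where "ev (Pr f g) (n # xs) y2" "ev g (n # y2 # xs) y'"
    by (rule ev_PrE) auto
  then show ?case using evPrS.IH by metis
next
  case (evMn f n xs)
  from evMn.prems have zero: "ev f (y' # xs) 0"
    and pos: "\<forall>m<y'. \<exists>v. 0 < v \<and> ev f (m # xs) v"
    by (auto elim: ev_MnE)
  have "\<not> n < y'"
    using pos evMn.IH(1) by (metis less_irrefl)
  moreover have "\<not> y' < n"
    using zero evMn.IH(2) by (metis less_irrefl)
  ultimately show ?case by simp
qed

lemma ev_Cn_unary: "ev g xs y \<Longrightarrow> ev f [y] z \<Longrightarrow> ev (Cn f [g]) xs z"
  by (rule evCn[where ys="[y]"]) simp_all

lemma ev_Cn_binary: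
  assumes "ev g1 xs y1" "ev g2 xs y2" "ev f [y1, y2] z"
  shows "ev (Cn f [g1, g2]) xs z"
proof (rule evCn[where ys="[y1, y2]"])
  show "\<forall>i<length [g1, g2]. ev ([g1, g2] ! i) xs ([y1, y2] ! i)"
    using assms by (auto simp: less_Suc_eq)
qed (use assms in simp_all)

lemma ev_Proj_nth: "i < length xs \<Longrightarrow> xs ! i = y \<Longrightarrow> ev (Proj i) xs y"
  using evProj[of i xs] by simp

fun const_recf :: "nat \<Rightarrow> recf" where
  "const_recf 0 = Zr"
| "const_recf (Suc k) = Cn Sc [const_recf k]"

lemma ev_const_recf: "ev (const_recf k) xs k"
  by (induction k) (auto intro: evZ ev_Cn_unary evS)

definition add_recf :: recf where
  "add_recf = Pr (Proj 0) (Cn Sc [Proj 1])"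

lemma ev_add_recf: "ev add_recf [n, x] (n + x)"
proof (induction n)
  case 0
  show ?case unfolding add_recf_def using evPr0[OF evProj[of 0 "[x]"]] by simp
next
  case (Suc n)
  have "ev (Cn Sc [Proj 1]) [n, n + x, x] (Suc (n + x))"
    by (rule ev_Cn_unary[OF ev_Proj_nth evS]) auto
  with evPrS[OF Suc[unfolded add_recf_def]] show ?case unfolding add_recf_def by simp
qed

definition triangle_recf :: recf where
  "triangle_recf = Pr Zr (Cn add_recf [Proj 1, Cn Sc [Proj 0]])"

lemma ev_triangle_recf: "ev triangle_recf [n] (triangle n)"
proof (induction n)
  case 0
  show ?case unfolding triangle_recf_def using evPr0[OF evZ[of "[]"]] by simp
next
  case (Suc n)
  have "ev (Cn add_recf [Proj 1, Cn Sc [Proj 0]]) [n, triangle n] (triangle n + Suc n)"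
    by (rule ev_Cn_binary[OF ev_Proj_nth ev_Cn_unary[OF ev_Proj_nth evS] ev_add_recf]) auto
  with evPrS[OF Suc[unfolded triangle_recf_def]] show ?case
    unfolding triangle_recf_def by simp
qed

text \<open>Computes \<open>list_encode (k # xs)\<close> from \<open>list_encode xs\<close>.\<close>

definition cons_recf :: "nat \<Rightarrow> recf" where
  "cons_recf k = Cn Sc [Cn add_recf [Cn triangle_recf [Cn add_recf [const_recf k, Proj 0]],
                                     const_recf k]]"

lemma ev_cons_recf: "ev (cons_recf k) [x] (Suc (prod_encode (k, x)))"
proof -
  have "ev (Cn add_recf [const_recf k, Proj 0]) [x] (k + x)"
    by (rule ev_Cn_binary[OF ev_const_recf ev_Proj_nth ev_add_recf]) auto
  then have "ev (Cn triangle_recf [Cn add_recf [const_recf k, Proj 0]]) [x] (triangle (k + x))"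
    by (rule ev_Cn_unary[OF _ ev_triangle_recf])
  then have "ev (Cn add_recf [Cn triangle_recf [Cn add_recf [const_recf k, Proj 0]],
                              const_recf k]) [x] (triangle (k + x) + k)"
    by (rule ev_Cn_binary[OF _ ev_const_recf ev_add_recf])
  from ev_Cn_unary[OF this evS] show ?thesis
    unfolding cons_recf_def prod_encode_def by simp
qed

lemma re_nat_vimage:
  assumes total: "\<And>x. ev g [x] (h x)" and "re_nat A"
  shows "re_nat (h -` A)"
proof -
  from \<open>re_nat A\<close> obtain f where f: "A = {n. \<exists>y. ev f [n] y}"
    unfolding re_nat_def by blast
  have "(\<exists>z. ev (Cn f [g]) [x] z) \<longleftrightarrow> (\<exists>z. ev f [h x] z)" for x
  proof
    assume "\<exists>z. ev (Cn f [g]) [x] z"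
    then obtain z ys where "length ys = 1" "ev g [x] (ys ! 0)" "ev f ys z"
      by (auto elim: ev_CnE)
    moreover from this(1) have "ys = [ys ! 0]" by (cases ys) auto
    moreover have "ys ! 0 = h x" using ev_deterministic[OF total] calculation(2) by metis
    ultimately show "\<exists>z. ev f [h x] z" by metis
  qed (use ev_Cn_unary[OF total] in blast)
  then have "h -` A = {x. \<exists>z. ev (Cn f [g]) [x] z}" using f by auto
  then show ?thesis unfolding re_nat_def by blast
qed

lemma re_words_derivative:
  assumes "re_words P"
  shows "re_words {u. n # u \<in> P}"
proof -
  from assms obtain c :: "'a \<Rightarrow> nat" where c: "inj c"
    and re: "re_nat ((\<lambda>w. list_encode (map c w)) ` P)"
    unfolding re_words_def by blast
  let ?code = "\<lambda>w. list_encode (map c w)"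
  have "?code ` {u. n # u \<in> P} = (\<lambda>x. Suc (prod_encode (c n, x))) -` ?code ` P"
  proof (rule set_eqI, rule iffI)
    fix x assume "x \<in> (\<lambda>x. Suc (prod_encode (c n, x))) -` ?code ` P"
    then obtain w where w: "w \<in> P" "Suc (prod_encode (c n, x)) = ?code w" by auto
    then obtain m u where "w = m # u" by (cases w) auto
    with w c show "x \<in> ?code ` {u. n # u \<in> P}" by (auto dest: injD)
  qed (force intro: image_eqI)
  with re_nat_vimage[OF ev_cons_recf re] c show ?thesis
    unfolding re_words_def by metis
qed

lemma Omega_derivative:
  assumes "P \<in> Omega" "[n] \<notin> P"
  shows "{u. n # u \<in> P} \<in> Omega"
proof -
  have "strict_prefix (n # u) (n # v)" if "strict_prefix u v" for u v
    using that by (simp add: strict_prefix_def)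
  then show ?thesis using assms unfolding Omega_def prefix_free_def by blast
qed

theorem mainTheorem19:
  "\<exists>(X :: 'a::finite list set set) u. detector X u \<and>
     {C u x | x. x \<in> X} = {S :: (nat \<Rightarrow> 'a) set. re_safety S}"
proof (intro exI conjI)
  show "detector {P \<in> Omega. re_words P} omega"
    unfolding detector_def omega_def
    using Omega_derivative re_words_derivative by auto
  show "{C omega x | x. x \<in> {P \<in> Omega. re_words (P :: 'a list set)}} = {S. re_safety S}"
    unfolding re_safety_def by auto
qed

end
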